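(* Let $M$ be a matroid on $E$ whose dual is transversal with presentation $\mathcal A=(A_1,\ldots,A_r)$, $r=r^*(M)$, and let $e\in E$. Let $X\subseteq E-e$. Then $$r_{M\backslash e}(X)\le |X|-|\mathcal A(X)|-\max\{|\mathcal A_e(X\cup\{e\})|-1,\,0\},$$ with equality if $X$ is a cyclic flat of $M\backslash e$.
   Context: $M^*=M[\mathcal A]$, the transversal matroid whose independent sets are the partial transversals of $\mathcal A$; $r^*(M)$ is the rank of $M^*$. For $Y\subseteq E$: $\mathcal A(Y)=\{i\in[r]:A_i\subseteq Y\}$ and $\mathcal A_e(Y)=\{i\in\mathcal A(Y): e\in A_i\}$. A cyclic flat is a flat that is a union of circuits. *)

theory Defs
  imports Main
begin

definition matroid :: "'a set \<Rightarrow> ('a set \<Rightarrow> bool) \<Rightarrow> bool" where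
  "matroid E indep \<longleftrightarrow> finite E \<and> (\<forall>I. indep I \<longrightarrow> I \<subseteq> E) \<and> indep {} \<and>
     (\<forall>I J. indep J \<and> I \<subseteq> J \<longrightarrow> indep I) \<and>
     (\<forall>I J. indep I \<and> indep J \<and> card I < card J \<longrightarrow> (\<exists>x\<in>J - I. indep (insert x I)))"

definition basis :: "'a set \<Rightarrow> ('a set \<Rightarrow> bool) \<Rightarrow> 'a set \<Rightarrow> bool" where
  "basis E indep B \<longleftrightarrow> indep B \<and> (\<forall>x\<in>E - B. \<not> indep (insert x B))"

definition rank :: "('a set \<Rightarrow> bool) \<Rightarrow> 'a set \<Rightarrow> nat" where
  "rank indep X = Max (card ` {I. I \<subseteq> X \<and> indep I})"

definition dual_indep :: "'a set \<Rightarrow> ('a set \<Rightarrow> bool) \<Rightarrow> 'a set \<Rightarrow> bool" where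
  "dual_indep E indep I \<longleftrightarrow> I \<subseteq> E \<and> (\<exists>B. basis E indep B \<and> I \<inter> B = {})"

text \<open>Deletion M \ e (ground set E - {e}).\<close>
definition del_indep :: "('a set \<Rightarrow> bool) \<Rightarrow> 'a \<Rightarrow> 'a set \<Rightarrow> bool" where
  "del_indep indep e I \<longleftrightarrow> indep I \<and> e \<notin> I"

definition partial_transversal :: "(nat \<Rightarrow> 'a set) \<Rightarrow> nat \<Rightarrow> 'a set \<Rightarrow> bool" where
  "partial_transversal A r I \<longleftrightarrow>
     (\<exists>f. inj_on f I \<and> (\<forall>x\<in>I. f x < r \<and> x \<in> A (f x)))"

definition circuit :: "'a set \<Rightarrow> ('a set \<Rightarrow> bool) \<Rightarrow> 'a set \<Rightarrow> bool" where
  "circuit E indep C \<longleftrightarrow> C \<subseteq> E \<and> \<not> indep C \<and> (\<forall>x\<in>C. indep (C - {x}))"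

definition flat :: "'a set \<Rightarrow> ('a set \<Rightarrow> bool) \<Rightarrow> 'a set \<Rightarrow> bool" where
  "flat E indep X \<longleftrightarrow> X \<subseteq> E \<and> (\<forall>y\<in>E - X. rank indep (insert y X) > rank indep X)"

text \<open>Cyclic set: a union of circuits.\<close>
definition cyclic :: "'a set \<Rightarrow> ('a set \<Rightarrow> bool) \<Rightarrow> 'a set \<Rightarrow> bool" where
  "cyclic E indep X \<longleftrightarrow> (\<forall>x\<in>X. \<exists>C. circuit E indep C \<and> x \<in> C \<and> C \<subseteq> X)"

definition cyclic_flat :: "'a set \<Rightarrow> ('a set \<Rightarrow> bool) \<Rightarrow> 'a set \<Rightarrow> bool" where
  "cyclic_flat E indep X \<longleftrightarrow> flat E indep X \<and> cyclic E indep X"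

definition calA :: "(nat \<Rightarrow> 'a set) \<Rightarrow> nat \<Rightarrow> 'a set \<Rightarrow> nat set" where
  "calA A r Y = {i. i < r \<and> A i \<subseteq> Y}"

definition calAe :: "(nat \<Rightarrow> 'a set) \<Rightarrow> nat \<Rightarrow> 'a \<Rightarrow> 'a set \<Rightarrow> nat set" where
  "calAe A r e Y = {i \<in> calA A r Y. e \<in> A i}"

end

theory Submission
  imports Defs
begin

(* By duality, r(X) = |X| + r*(E - X) - r*(E) for X \<subseteq> E, so everything is a statement
   about the rank of Y = E - X in the transversal matroid M* = M[A].  A partial transversal
   inside Y is matched into the sets A_i meeting Y, and all of it except possibly e into the
   sets meeting Y - e; these are r - |A(X)| and r - |A(X)| - |A_e(X + e)| sets, which gives
   the upper bound.  If X is a flat of M \ e, then no element of Y - e is a coloop of M*|Y.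
   By the defect form of Hall's theorem, a coloop-free set F of a transversal matroid has
   rank at least the number of sets meeting F; applying this to Y, or to Y - e when e is a
   coloop of M*|Y, gives the matching lower bound. *)

definition neighbours :: "('i \<Rightarrow> 'a set) \<Rightarrow> 'i set \<Rightarrow> 'a set \<Rightarrow> 'i set" where
  "neighbours B I K = {i \<in> I. B i \<inter> K \<noteq> {}}"

lemma neighbours_subset: "neighbours B I K \<subseteq> I"
  by (auto simp: neighbours_def)

lemma neighbours_Diff_index: "neighbours B (I - J) K = neighbours B I K - J"
  by (auto simp: neighbours_def)

lemma neighbours_mono: "K \<subseteq> L \<Longrightarrow> neighbours B I K \<subseteq> neighbours B I L"
  by (auto simp: neighbours_def)

lemma Hall_marriage:
  fixes B :: "'i \<Rightarrow> 'a set"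
  assumes "finite S" "finite I"
    and "\<And>K. K \<subseteq> S \<Longrightarrow> card K \<le> card (neighbours B I K)"
  shows "\<exists>f. inj_on f S \<and> (\<forall>x\<in>S. f x \<in> I \<and> x \<in> B (f x))"
  using assms
proof (induction "card S" arbitrary: S I rule: less_induct)
  case less
  note Hall = less.prems(3)
  have fin_N: "finite (neighbours B I K)" for K
    by (rule finite_subset[OF neighbours_subset less.prems(2)])
  (* Halmos-Vaughan: a nonempty proper K with exactly card K neighbours splits the problem
     into K and S - K; if there is none, any x can be matched to any of its neighbours. *)
  show ?case
  proof (cases "\<exists>K. K \<subseteq> S \<and> K \<noteq> {} \<and> K \<noteq> S \<and> card K = card (neighbours B I K)")
    case True
    then obtain K where K: "K \<subseteq> S" "K \<noteq> {}" "K \<noteq> S"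
      and tight: "card K = card (neighbours B I K)" by blast
    define N where "N = neighbours B I K"
    have "finite K" using finite_subset[OF K(1) less.prems(1)] .
    have "card K < card S" "card (S - K) < card S"
      using K less.prems(1) by (auto intro: psubset_card_mono)
    obtain f where f: "inj_on f K" "\<forall>x\<in>K. f x \<in> I \<and> x \<in> B (f x)"
      using less.hyps[OF \<open>card K < card S\<close> \<open>finite K\<close> less.prems(2)] Hall K(1) by blast
    have "card L \<le> card (neighbours B (I - N) L)" if L: "L \<subseteq> S - K" for L
    proof -
      have "card L + card K = card (L \<union> K)"
        using L less.prems(1) \<open>finite K\<close> by (subst card_Un_disjoint) (auto intro: finite_subset)
      also have "\<dots> \<le> card (neighbours B I (L \<union> K))"
        using L K(1) by (intro Hall) blast
      also have "\<dots> = card (neighbours B I (L \<union> K) - N) + card N"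
        using fin_N by (simp add: N_def card_Diff_subset card_mono neighbours_mono)
      also have "neighbours B I (L \<union> K) - N = neighbours B (I - N) L"
        by (auto simp: N_def neighbours_def)
      finally show ?thesis using tight N_def by simp
    qed
    then obtain g where g: "inj_on g (S - K)" "\<forall>x\<in>S - K. g x \<in> I - N \<and> x \<in> B (g x)"
      using less.hyps[OF \<open>card (S - K) < card S\<close>] less.prems(1,2) by blast
    have "f ` K \<subseteq> N" "g ` (S - K) \<inter> N = {}"
      using f(2) g(2) by (auto simp: N_def neighbours_def)
    then have "inj_on (\<lambda>x. if x \<in> K then f x else g x) (K \<union> (S - K))"
      using f(1) g(1) by (intro inj_on_disjoint_Un) auto
    moreover have "K \<union> (S - K) = S" using K(1) by blast
    ultimately show ?thesis using f(2) g(2) by (intro exI[of _ "\<lambda>x. if x \<in> K then f x else g x"]) auto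
  next
    case no_tight: False
    show ?thesis
    proof (cases "S = {}")
      case True then show ?thesis by simp
    next
      case False
      then obtain x where x: "x \<in> S" by blast
      have "card {x} \<le> card (neighbours B I {x})" using Hall x by blast
      then have "neighbours B I {x} \<noteq> {}" by auto
      then obtain i where i: "i \<in> I" "x \<in> B i" by (auto simp: neighbours_def)
      have "card L \<le> card (neighbours B (I - {i}) L)" if L: "L \<subseteq> S - {x}" for L
      proof (cases "L = {}")
        case False
        have "L \<subseteq> S" "L \<noteq> S" using L x by auto
        then have "card L \<noteq> card (neighbours B I L)" using no_tight False by blast
        then have "card L < card (neighbours B I L)" using Hall[OF \<open>L \<subseteq> S\<close>] by simp
        then show ?thesis
          unfolding neighbours_Diff_index
          using diff_card_le_card_Diff[of "{i}" "neighbours B I L"] by simp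
      qed simp
      then obtain g where g: "inj_on g (S - {x})" "\<forall>y\<in>S - {x}. g y \<in> I - {i} \<and> y \<in> B (g y)"
        using less.hyps[OF card_Diff1_less[OF less.prems(1) x]] less.prems(1,2) by blast
      have "inj_on (g(x := i)) (insert x (S - {x}))"
        using g by (auto simp: inj_on_def)
      then show ?thesis
        using g(2) i insert_Diff[OF x] by (intro exI[of _ "g(x := i)"]) auto
    qed
  qed
qed

lemma partial_transversal_card_le:
  assumes "partial_transversal A r J" "finite J"
  shows "card J \<le> card (J - K) + card (neighbours A {..<r} K)"
proof -
  obtain f where f: "inj_on f J" "\<forall>x\<in>J. f x < r \<and> x \<in> A (f x)"
    using assms(1) unfolding partial_transversal_def by blast
  have "card (J \<inter> K) = card (f ` (J \<inter> K))"
    using inj_on_subset[OF f(1)] by (simp add: card_image)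
  also have "\<dots> \<le> card (neighbours A {..<r} K)"
    using f(2) by (intro card_mono) (auto simp: neighbours_def)
  finally show ?thesis using card_Int_Diff[OF assms(2), of K] by linarith
qed

lemma partial_transversal_defect:
  assumes "finite S"
  obtains K J where "K \<subseteq> S" "J \<subseteq> S" "partial_transversal A r J"
    "card S + card (neighbours A {..<r} K) \<le> card J + card K"
proof -
  let ?N = "neighbours A {..<r}"
  define defect where "defect K = int (card K) - int (card (?N K))" for K
  have fin: "finite (defect ` Pow S)" using assms by simp
  have "Max (defect ` Pow S) \<in> defect ` Pow S" by (rule Max_in[OF fin]) auto
  then obtain K0 where "Max (defect ` Pow S) = defect K0" "K0 \<in> Pow S" ..
  then have K0: "K0 \<subseteq> S" "\<And>K. K \<subseteq> S \<Longrightarrow> defect K \<le> defect K0"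
    using Max_ge[OF fin] by auto
  have "defect {} = 0" by (simp add: defect_def neighbours_def)
  then have "0 \<le> defect K0" using K0(2)[of "{}"] by simp
  define d where "d = nat (defect K0)"
  (* Adjoining d copies of S to the family makes Hall's condition hold. *)
  define B where "B i = (if i < r then A i else S)" for i
  have "card K \<le> card (neighbours B {..<r + d} K)" if K: "K \<subseteq> S" for K
  proof (cases "K = {}")
    case False
    then have "neighbours B {..<r + d} K = ?N K \<union> {r..<r + d}"
      using K by (auto simp: neighbours_def B_def)
    moreover have "card (?N K \<union> {r..<r + d}) = card (?N K) + d"
      by (subst card_Un_disjoint) (auto simp: neighbours_def)
    moreover have "defect K \<le> int d" using K0(2)[OF K] \<open>0 \<le> defect K0\<close> by (simp add: d_def)
    ultimately show ?thesis by (simp add: defect_def)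
  qed simp
  then have "\<exists>f. inj_on f S \<and> (\<forall>x\<in>S. f x \<in> {..<r + d} \<and> x \<in> B (f x))"
    by (rule Hall_marriage[OF assms finite_lessThan])
  then obtain f where f: "inj_on f S" "\<forall>x\<in>S. f x < r + d \<and> x \<in> B (f x)" by auto
  define J where "J = {x \<in> S. f x < r}"
  have "partial_transversal A r J"
    unfolding partial_transversal_def J_def
    using f inj_on_subset[OF f(1)] by (intro exI[of _ f]) (auto simp: B_def)
  moreover have "card (S - J) \<le> d"
  proof -
    have "card (S - J) = card (f ` (S - J))"
      using inj_on_subset[OF f(1)] by (simp add: card_image)
    also have "\<dots> \<le> card {r..<r + d}"
      using f(2) by (intro card_mono) (auto simp: J_def)
    finally show ?thesis by simp
  qed
  moreover have "card S = card J + card (S - J)"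
    using card_Int_Diff[OF assms, of J] by (simp add: J_def Int_absorb1)
  ultimately show ?thesis
    using that[OF K0(1), of J] \<open>0 \<le> defect K0\<close> by (simp add: J_def d_def defect_def)
qed

lemma partial_transversal_empty: "partial_transversal A r {}"
  by (simp add: partial_transversal_def)

lemma partial_transversal_subset:
  "partial_transversal A r J \<Longrightarrow> I \<subseteq> J \<Longrightarrow> partial_transversal A r I"
  unfolding partial_transversal_def by (meson inj_on_subset subsetD)

lemma rank_del_indep: "e \<notin> S \<Longrightarrow> rank (del_indep indep e) S = rank indep S"
  unfolding rank_def del_indep_def by (metis subsetD)

locale indep_system =
  fixes E :: "'a set" and indep :: "'a set \<Rightarrow> bool"
  assumes finite_ground: "finite E"
    and indep_subset_ground: "indep I \<Longrightarrow> I \<subseteq> E"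
    and indep_empty: "indep {}"
    and indep_subset: "indep J \<Longrightarrow> I \<subseteq> J \<Longrightarrow> indep I"
begin

lemma finite_indep: "indep I \<Longrightarrow> finite I"
  using finite_subset[OF indep_subset_ground finite_ground] .

lemma finite_indep_subsets: "finite {I. I \<subseteq> X \<and> indep I}"
  by (rule finite_subset[of _ "Pow E"]) (use indep_subset_ground finite_ground in auto)

lemma card_le_rank: "indep I \<Longrightarrow> I \<subseteq> X \<Longrightarrow> card I \<le> rank indep X"
  unfolding rank_def by (intro Max_ge finite_imageI finite_indep_subsets) auto

lemma obtain_rank_indep:
  obtains I where "I \<subseteq> X" "indep I" "card I = rank indep X"
proof -
  have "card ` {I. I \<subseteq> X \<and> indep I} \<noteq> {}" using indep_empty by blast
  then have "rank indep X \<in> card ` {I. I \<subseteq> X \<and> indep I}"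
    unfolding rank_def by (rule Max_in[OF finite_imageI[OF finite_indep_subsets]])
  then obtain I where "rank indep X = card I" "I \<in> {I. I \<subseteq> X \<and> indep I}" ..
  then show ?thesis using that[of I] by simp
qed

lemma rank_empty: "rank indep {} = 0"
  by (metis obtain_rank_indep card.empty subset_empty)

lemma rank_insert_le: "rank indep (insert y X) \<le> rank indep X + 1"
proof -
  obtain I where I: "I \<subseteq> insert y X" "indep I" "card I = rank indep (insert y X)"
    by (rule obtain_rank_indep)
  have "card I \<le> card (I - {y}) + 1"
    using card_Suc_Diff1[OF finite_indep[OF I(2)], of y] by (cases "y \<in> I") auto
  also have "card (I - {y}) \<le> rank indep X"
    using I indep_subset[of I "I - {y}"] by (intro card_le_rank) auto
  finally show ?thesis using I(3) by simp
qed

end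

locale indep_matroid = indep_system +
  assumes augment: "indep I \<Longrightarrow> indep J \<Longrightarrow> card I < card J \<Longrightarrow> \<exists>x\<in>J - I. indep (insert x I)"

lemma indep_matroid_if_matroid:
  assumes "matroid E indep"
  shows "indep_matroid E indep"
  using assms[unfolded matroid_def] by unfold_locales blast+

context indep_matroid
begin

lemma extend_to_rank_indep:
  assumes "indep I" "I \<subseteq> X"
  obtains J where "I \<subseteq> J" "J \<subseteq> X" "indep J" "card J = rank indep X"
proof -
  let ?ext = "\<lambda>J. I \<subseteq> J \<and> J \<subseteq> X \<and> indep J"
  have "card J < card E + 1" if "?ext J" for J
    using that card_mono[OF finite_ground indep_subset_ground[of J]] by simp
  then have "\<exists>J. ?ext J \<and> (\<forall>J'. ?ext J' \<longrightarrow> card J' \<le> card J)"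
    using assms by (intro ex_has_greatest_nat[of ?ext I card "card E + 1"]) auto
  then obtain J where J: "?ext J" and max: "\<And>J'. ?ext J' \<Longrightarrow> card J' \<le> card J"
    by blast
  have "\<not> card J < rank indep X"
  proof
    assume "card J < rank indep X"
    moreover obtain J0 where "J0 \<subseteq> X" "indep J0" "card J0 = rank indep X"
      by (rule obtain_rank_indep)
    ultimately obtain x where "x \<in> J0 - J" "indep (insert x J)"
      using augment[of J J0] J by auto
    then have "?ext (insert x J)" using J \<open>J0 \<subseteq> X\<close> by auto
    moreover have "card (insert x J) = card J + 1"
      using \<open>x \<in> J0 - J\<close> finite_indep[of J] J by simp
    ultimately show False using max[of "insert x J"] by simp
  qed
  then show ?thesis using that[of J] J card_le_rank[of J X] by simp
qed

lemma basis_iff_card_eq_rank: "basis E indep B \<longleftrightarrow> indep B \<and> card B = rank indep E"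
proof
  assume B: "basis E indep B"
  then have "indep B" by (simp add: basis_def)
  then obtain J where J: "B \<subseteq> J" "J \<subseteq> E" "indep J" "card J = rank indep E"
    using extend_to_rank_indep[of B E] indep_subset_ground by blast
  have "J \<subseteq> B"
  proof
    fix x assume "x \<in> J"
    then have "indep (insert x B)" using J indep_subset[of J "insert x B"] by blast
    then show "x \<in> B" using B J(2) \<open>x \<in> J\<close> by (auto simp: basis_def)
  qed
  then show "indep B \<and> card B = rank indep E" using J \<open>indep B\<close> by auto
next
  assume B: "indep B \<and> card B = rank indep E"
  have False if "x \<in> E - B" "indep (insert x B)" for x
  proof -
    have "card (insert x B) \<le> card B"
      using B card_le_rank[OF that(2)] that(1) indep_subset_ground by auto
    then show False using that(1) finite_indep B by simp
  qed
  then show "basis E indep B" using B by (auto simp: basis_def)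
qed

sublocale dual: indep_system E "dual_indep E indep"
proof
  obtain B where "indep B" "card B = rank indep E" using obtain_rank_indep by metis
  then show "dual_indep E indep {}" by (auto simp: dual_indep_def basis_iff_card_eq_rank)
qed (auto simp: dual_indep_def finite_ground)

lemma rank_dual:
  assumes S: "S \<subseteq> E"
  shows "rank (dual_indep E indep) S + rank indep E = card S + rank indep (E - S)"
proof (rule antisym)
  obtain J where J: "J \<subseteq> S" "dual_indep E indep J" "card J = rank (dual_indep E indep) S"
    by (rule dual.obtain_rank_indep)
  then obtain B where B: "basis E indep B" "J \<inter> B = {}" unfolding dual_indep_def by blast
  then have "indep B" "card B = rank indep E" by (simp_all add: basis_iff_card_eq_rank)
  have fin: "finite S" "finite B"
    using finite_subset[OF S finite_ground] finite_indep[OF \<open>indep B\<close>] .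
  have "card (B - S) \<le> rank indep (E - S)"
    using \<open>indep B\<close> indep_subset[of B "B - S"] indep_subset_ground[of B]
    by (intro card_le_rank) auto
  moreover have "card (B \<inter> S) \<le> card (S - J)"
    using B(2) fin by (intro card_mono) auto
  moreover have "card S = card J + card (S - J)"
    using card_Diff_subset[OF finite_subset[OF J(1) fin(1)] J(1)] card_mono[OF fin(1) J(1)] by simp
  ultimately show "rank (dual_indep E indep) S + rank indep E \<le> card S + rank indep (E - S)"
    using J(3) \<open>card B = rank indep E\<close> card_Int_Diff[OF fin(2), of S] by linarith
next
  obtain I where I: "I \<subseteq> E - S" "indep I" "card I = rank indep (E - S)"
    by (rule obtain_rank_indep)
  moreover have "I \<subseteq> E" using I(1) by blast
  ultimately obtain B where B: "I \<subseteq> B" "B \<subseteq> E" "indep B" "card B = rank indep E"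
    using extend_to_rank_indep by metis
  have fin: "finite S" "finite B"
    using finite_subset[OF S finite_ground] finite_indep[OF B(3)] .
  have "dual_indep E indep (S - B)"
    using S B by (auto simp: dual_indep_def basis_iff_card_eq_rank)
  then have "card (S - B) \<le> rank (dual_indep E indep) S"
    by (rule dual.card_le_rank) auto
  moreover have "card I \<le> card (B - S)"
    using I(1) B(1) fin by (intro card_mono) auto
  ultimately show "card S + rank indep (E - S) \<le> rank (dual_indep E indep) S + rank indep E"
    using I(3) B(4) card_Int_Diff[OF fin(1), of B] card_Int_Diff[OF fin(2), of S]
    by (simp add: Int_commute)
qed

lemma rank_add_dual_rank:
  assumes "X \<subseteq> E"
  shows "rank indep X + rank (dual_indep E indep) E = card X + rank (dual_indep E indep) (E - X)"
proof -
  have "E - (E - X) = X" using assms by blast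
  then have "rank (dual_indep E indep) (E - X) + rank indep E = card (E - X) + rank indep X"
    using rank_dual[of "E - X"] by simp
  moreover have "rank (dual_indep E indep) E + rank indep E = card E"
    using rank_dual[of E] rank_empty by simp
  moreover have "card E = card (E - X) + card X"
    using card_Diff_subset[OF finite_subset[OF assms finite_ground] assms]
      card_mono[OF finite_ground assms] by simp
  ultimately show ?thesis by linarith
qed

lemma dual_rank_le_Diff_if_flat_del:
  assumes flat: "flat (E - {e}) (del_indep indep e) X" and y: "y \<in> E - X - {e}"
  shows "rank (dual_indep E indep) (E - X) \<le> rank (dual_indep E indep) (E - X - {y})"
proof -
  have X: "X \<subseteq> E" "e \<notin> X" using flat by (auto simp: flat_def)
  have "rank (del_indep indep e) X < rank (del_indep indep e) (insert y X)"
    using flat y by (auto simp: flat_def)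
  moreover have "e \<notin> insert y X" using y X by blast
  ultimately have "rank indep X < rank indep (insert y X)"
    using rank_del_indep[OF \<open>e \<notin> X\<close>] rank_del_indep[of e "insert y X"] by simp
  moreover have "E - insert y X = E - X - {y}" by blast
  moreover have "card (insert y X) = card X + 1"
    using y finite_subset[OF X(1) finite_ground] by simp
  ultimately show ?thesis
    using y X rank_add_dual_rank[of X] rank_add_dual_rank[of "insert y X"] by simp
qed


end

locale transversal_system =
  fixes E :: "'a set" and indep :: "'a set \<Rightarrow> bool" and A :: "nat \<Rightarrow> 'a set" and r :: nat
  assumes finite_E: "finite E"
    and indep_iff_partial_transversal: "indep I \<longleftrightarrow> I \<subseteq> E \<and> partial_transversal A r I"
begin

sublocale indep_system E indep
  by unfold_locales
    (auto simp: indep_iff_partial_transversal finite_E partial_transversal_empty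
      intro: partial_transversal_subset)

lemma rank_le_card_Diff_neighbours:
  assumes "F \<subseteq> E"
  shows "rank indep F \<le> card (F - K) + card (neighbours A {..<r} K)"
proof -
  obtain J where J: "J \<subseteq> F" "indep J" "card J = rank indep F"
    by (rule obtain_rank_indep)
  have "card J \<le> card (J - K) + card (neighbours A {..<r} K)"
    using J(2) finite_indep[OF J(2)] indep_iff_partial_transversal
    by (intro partial_transversal_card_le) auto
  moreover have "card (J - K) \<le> card (F - K)"
    using J(1) finite_subset[OF assms finite_E] by (intro card_mono) auto
  ultimately show ?thesis using J(3) by linarith
qed

lemma card_neighbours_le_rank:
  assumes F: "F \<subseteq> E" and no_coloop: "\<And>x. x \<in> F \<Longrightarrow> rank indep F \<le> rank indep (F - {x})"
  shows "card (neighbours A {..<r} F) \<le> rank indep F"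
proof -
  have fin: "finite F" using finite_subset[OF F finite_E] .
  obtain K J where KJ: "K \<subseteq> F" "J \<subseteq> F" "partial_transversal A r J"
    and defect: "card F + card (neighbours A {..<r} K) \<le> card J + card K"
    by (rule partial_transversal_defect[OF fin])
  have "card J \<le> rank indep F"
    using KJ F indep_iff_partial_transversal[of J] by (intro card_le_rank) auto
  have "K = F"
  proof (rule ccontr)
    assume "K \<noteq> F"
    then obtain x where x: "x \<in> F" "x \<notin> K" using KJ(1) by blast
    have "rank indep F \<le> rank indep (F - {x})" by (rule no_coloop[OF x(1)])
    also have "\<dots> \<le> card (F - K - {x}) + card (neighbours A {..<r} K)"
      using rank_le_card_Diff_neighbours[of "F - {x}" K] F
      by (auto simp: Diff_insert[symmetric] Diff_insert2[symmetric])
    finally have "rank indep F + 1 \<le> card (F - K) + card (neighbours A {..<r} K)"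
      using card_Suc_Diff1[of "F - K" x] x fin by simp
    moreover have "card (F - K) = card F - card K"
      using card_Diff_subset[OF finite_subset[OF KJ(1) fin] KJ(1)] .
    ultimately show False
      using defect \<open>card J \<le> rank indep F\<close> card_mono[OF fin KJ(1)] by linarith
  qed
  with defect \<open>card J \<le> rank indep F\<close> show ?thesis by simp
qed

lemma rank_le_min_card_neighbours:
  assumes "F \<subseteq> E"
  shows "rank indep F
           \<le> min (card (neighbours A {..<r} F)) (card (neighbours A {..<r} (F - {e})) + 1)"
proof -
  have "card (F - (F - {e})) \<le> card {e}" by (rule card_mono) auto
  then show ?thesis
    using rank_le_card_Diff_neighbours[OF assms, of F]
      rank_le_card_Diff_neighbours[OF assms, of "F - {e}"] by simp
qed

lemma rank_eq_min_card_neighbours: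
  assumes F: "F \<subseteq> E"
    and no_coloop: "\<And>x. x \<in> F - {e} \<Longrightarrow> rank indep F \<le> rank indep (F - {x})"
  shows "rank indep F
           = min (card (neighbours A {..<r} F)) (card (neighbours A {..<r} (F - {e})) + 1)"
proof (cases "rank indep F \<le> rank indep (F - {e})")
  case True
  then have "rank indep F \<le> rank indep (F - {x})" if "x \<in> F" for x
    using no_coloop[of x] that by (cases "x = e") auto
  then have "card (neighbours A {..<r} F) \<le> rank indep F"
    by (rule card_neighbours_le_rank[OF F])
  then show ?thesis using rank_le_min_card_neighbours[OF F, of e] by linarith
next
  case False
  then have "e \<in> F" by (cases "e \<in> F") simp_all
  have "rank indep (F - {e}) \<le> rank indep (F - {e} - {x})" if x: "x \<in> F - {e}" for x
  proof -
    have "F - {x} = insert e (F - {e} - {x})" using x \<open>e \<in> F\<close> by auto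
    then have "rank indep (F - {x}) \<le> rank indep (F - {e} - {x}) + 1"
      using rank_insert_le by metis
    then show ?thesis using no_coloop[OF x] False by linarith
  qed
  then have "card (neighbours A {..<r} (F - {e})) \<le> rank indep (F - {e})"
    using F by (intro card_neighbours_le_rank) auto
  then show ?thesis using False rank_le_min_card_neighbours[OF F, of e] by linarith
qed

end

lemma card_lessThan_Diff:
  assumes "C \<subseteq> {..<r}"
  shows "int (card ({..<r} - C)) = int r - int (card C)"
  using card_Diff_subset[OF finite_subset[OF assms finite_lessThan] assms]
    card_mono[OF finite_lessThan assms] by (simp add: of_nat_diff)

lemma card_neighbours_compl:
  assumes "\<forall>i<r. A i \<subseteq> E"
  shows "int (card (neighbours A {..<r} (E - X))) = int r - int (card (calA A r X))"
proof -
  have "neighbours A {..<r} (E - X) = {..<r} - calA A r X"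
    using assms by (auto simp: neighbours_def calA_def)
  moreover have "calA A r X \<subseteq> {..<r}" by (auto simp: calA_def)
  ultimately show ?thesis by (simp add: card_lessThan_Diff)
qed

lemma card_neighbours_compl_insert:
  assumes "\<forall>i<r. A i \<subseteq> E" "e \<notin> X"
  shows "int (card (neighbours A {..<r} (E - X - {e})))
           = int r - int (card (calA A r X)) - int (card (calAe A r e (insert e X)))"
proof -
  let ?C = "calA A r X \<union> calAe A r e (insert e X)"
  have "neighbours A {..<r} (E - X - {e}) = {..<r} - ?C"
    using assms(1) by (auto simp: neighbours_def calA_def calAe_def)
  moreover have "?C \<subseteq> {..<r}" by (auto simp: calA_def calAe_def)
  moreover have "card ?C = card (calA A r X) + card (calAe A r e (insert e X))"
    using assms(2) finite_subset[OF \<open>?C \<subseteq> {..<r}\<close> finite_lessThan]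
    by (intro card_Un_disjoint) (auto simp: calA_def calAe_def)
  ultimately show ?thesis by (simp add: card_lessThan_Diff)
qed

theorem lemma3p2:
  fixes E :: "'a set" and indep :: "'a set \<Rightarrow> bool" and A :: "nat \<Rightarrow> 'a set"
    and r :: nat and e :: 'a and X :: "'a set"
  assumes M: "matroid E indep"
    and r_def: "r = rank (dual_indep E indep) E"
    and A_sub: "\<forall>i<r. A i \<subseteq> E"
    and pres: "\<forall>I. dual_indep E indep I \<longleftrightarrow> (I \<subseteq> E \<and> partial_transversal A r I)"
    and e: "e \<in> E"
    and X: "X \<subseteq> E - {e}"
  shows "int (rank (del_indep indep e) X)
           \<le> int (card X) - int (card (calA A r X))
              - max (int (card (calAe A r e (insert e X))) - 1) 0
         \<and> (cyclic_flat (E - {e}) (del_indep indep e) X \<longrightarrow>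
             int (rank (del_indep indep e) X)
               = int (card X) - int (card (calA A r X))
                  - max (int (card (calAe A r e (insert e X))) - 1) 0)"
proof -
  interpret indep_matroid E indep by (rule indep_matroid_if_matroid[OF M])
  interpret dual: transversal_system E "dual_indep E indep" A r
    using pres finite_ground by unfold_locales blast+
  have XE: "X \<subseteq> E" and eX: "e \<notin> X" using X by auto
  let ?bound = "min (card (neighbours A {..<r} (E - X)))
    (card (neighbours A {..<r} (E - X - {e})) + 1)"
  have rank_X: "rank (del_indep indep e) X + r = card X + rank (dual_indep E indep) (E - X)"
    using rank_add_dual_rank[OF XE] rank_del_indep[OF eX] r_def by simp
  have "rank (dual_indep E indep) (E - X) \<le> ?bound"
    by (rule dual.rank_le_min_card_neighbours) blast
  moreover have "rank (dual_indep E indep) (E - X) = ?bound"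
    if "cyclic_flat (E - {e}) (del_indep indep e) X"
    using that by (intro dual.rank_eq_min_card_neighbours dual_rank_le_Diff_if_flat_del)
      (auto simp: cyclic_flat_def)
  ultimately show ?thesis
    using rank_X card_neighbours_compl[OF A_sub, of X] card_neighbours_compl_insert[OF A_sub eX]
    by (auto simp: min_def max_def)
qed

end
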